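(* Let $k\in\mathbb{N}$, let $u=a_1\cdots a_n$ be a word over a finite alphabet $A$, and let $i<j$ be positions with $a_i=a_j$ and $a_\ell\neq a_i$ for all $\ell\in\{i+1,\dots,j-1\}$. Suppose the attributes satisfy $x_i+y_i\le k+1$ and $x_j\le k$. Then for every word $v$ with $u\sim_k v$, the positions $r^u_i(v)$ and $r^u_j(v)$ are defined and $r^u_i(v)<r^u_j(v)$.
   Context: $w\prec v$ ($w$ is a scattered subword of $v$) means $v=v_0b_1v_1\cdots b_mv_m$ where $w=b_1\cdots b_m$. $u\sim_k v$ iff $u,v$ have the same subwords of length at most $k$. An X-ranker is a nonempty word over $\{\mathsf X_a : a\in A\}$, a Y-ranker a nonempty word over $\{\mathsf Y_a:a\in A\}$, length = word length. For a word $w$: $\mathsf X_a(w)$ is the smallest $a$-position, $r\mathsf X_a(w)$ the smallest $a$-position greater than $r(w)$; $\mathsf Y_a(w)$ the greatest $a$-position, $r\mathsf Y_a(w)$ the greatest $a$-position smaller than $r(w)$ (possibly undefined). The attribute of position $p$ of $u$ is $(x_p,y_p)$, $x_p$ (resp. $y_p$) the minimal length of an X-ranker (resp. Y-ranker) $r$ with $r(u)=p$. Canonical X-ranker $r^u_p$: let $R^u_p$ be the set of X-rankers of length $x_p$ reaching $p$ in $u$; set $S_{x_p}=R^u_p$ and for $t=x_p-1,\dots,1$ let $q_t$ be the minimal position of $u$ reached by length-$t$ prefixes of rankers in $S_{t+1}$ and $S_t$ the set of those rankers in $S_{t+1}$ whose length-$t$ prefix reaches $q_t$; then $S_1=\{r^u_p\}$.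 *)

theory Defs
  imports Main "HOL-Library.Sublist"
begin

text \<open>Words are lists; positions are 1-based: position p of w (1 \<le> p \<le> length w)
  carries the letter w ! (p - 1).\<close>

definition is_pos :: "'a list \<Rightarrow> 'a \<Rightarrow> nat \<Rightarrow> bool" where
  "is_pos w a p \<longleftrightarrow> 1 \<le> p \<and> p \<le> length w \<and> w ! (p - 1) = a"

definition next_pos :: "'a list \<Rightarrow> 'a \<Rightarrow> nat \<Rightarrow> nat option" where
  "next_pos w a q = (if \<exists>p. q < p \<and> is_pos w a p
      then Some (LEAST p. q < p \<and> is_pos w a p) else None)"

definition prev_pos :: "'a list \<Rightarrow> 'a \<Rightarrow> nat \<Rightarrow> nat option" where
  "prev_pos w a q = (if \<exists>p. p < q \<and> is_pos w a p
      then Some (GREATEST p. p < q \<and> is_pos w a p) else None)"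

text \<open>An X-ranker X_{b1}...X_{bm} is represented by the nonempty list [b1,...,bm];
  likewise a Y-ranker.\<close>
fun xev :: "'a list \<Rightarrow> nat \<Rightarrow> 'a list \<Rightarrow> nat option" where
  "xev w q [] = Some q"
| "xev w q (a # r) = (case next_pos w a q of None \<Rightarrow> None | Some p \<Rightarrow> xev w p r)"

fun yev :: "'a list \<Rightarrow> nat \<Rightarrow> 'a list \<Rightarrow> nat option" where
  "yev w q [] = Some q"
| "yev w q (a # r) = (case prev_pos w a q of None \<Rightarrow> None | Some p \<Rightarrow> yev w p r)"

text \<open>r(w) for an X-ranker r: X_a(w) is the smallest a-position (i.e. > 0).\<close>
definition xrank :: "'a list \<Rightarrow> 'a list \<Rightarrow> nat option" where
  "xrank w r = xev w 0 r"

text \<open>r(w) for a Y-ranker r: Y_a(w) is the greatest a-position (i.e. < length w + 1).\<close>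
definition yrank :: "'a list \<Rightarrow> 'a list \<Rightarrow> nat option" where
  "yrank w r = yev w (Suc (length w)) r"

definition xattr :: "'a list \<Rightarrow> nat \<Rightarrow> nat" where
  "xattr u p = (LEAST m. \<exists>r. r \<noteq> [] \<and> length r = m \<and> xrank u r = Some p)"

definition yattr :: "'a list \<Rightarrow> nat \<Rightarrow> nat" where
  "yattr u p = (LEAST m. \<exists>r. r \<noteq> [] \<and> length r = m \<and> yrank u r = Some p)"

text \<open>Canonical X-ranker r^u_p. canS u p d is S_t for t = x_p - d.\<close>
fun canS :: "'a list \<Rightarrow> nat \<Rightarrow> nat \<Rightarrow> 'a list set" where
  "canS u p 0 = {r. r \<noteq> [] \<and> length r = xattr u p \<and> xrank u r = Some p}"
| "canS u p (Suc d) =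
    (let t = xattr u p - Suc d;
         qt = Min {q. \<exists>r \<in> canS u p d. xrank u (take t r) = Some q}
     in {r \<in> canS u p d. xrank u (take t r) = Some qt})"

definition canon :: "'a list \<Rightarrow> nat \<Rightarrow> 'a list" where
  "canon u p = (THE r. r \<in> canS u p (xattr u p - 1))"

definition simk :: "nat \<Rightarrow> 'a list \<Rightarrow> 'a list \<Rightarrow> bool" where
  "simk k u v \<longleftrightarrow> (\<forall>w. length w \<le> k \<longrightarrow> (subseq w u \<longleftrightarrow> subseq w v))"

end

theory Submission
  imports Defs
begin

text \<open>
Write a for the common letter of u at i and j, r and s for the canonical X-rankers of i and j,
and let t be a shortest Y-ranker reaching i. Then rev t embeds into u starting at the a at
position i, and at no later position. The word r followed by rev t minus its first letter
embeds into u and has length x_i + y_i - 1, at most k, so it embeds into v; hence rev t embeds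
into v starting at position r(v).

If x_j is at most x_i and s(v) were at most r(v), then butlast s followed by rev t would embed
into v, and (having length at most k) also into u. As rev t cannot start after position i, the
ranker s would already be satisfied by the prefix of u of length i, contradicting s(u) = j > i.

If x_j exceeds x_i, then x_j = x_i + 1 and s is r followed by a: appending a turns the shortest
rankers for i into shortest rankers for j, the first selection step of the canonical
construction for j keeps exactly these (their prefixes of length x_i reach the least possible
position, namely i), and from then on the constructions for i and j run in parallel.
\<close>

lemma subseq_take: "subseq (take n xs) xs"
  by (rule prefix_imp_subseq[OF take_is_prefix])

lemma subseq_take_mono: "m \<le> n \<Longrightarrow> subseq (take m xs) (take n xs)"
  by (metis min.absorb1 take_take subseq_take)

lemma subseq_drop_mono: "m \<le> n \<Longrightarrow> subseq (drop n xs) (drop m xs)"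
  using suffix_imp_subseq[OF suffix_drop[of "n - m" "drop m xs"]] by simp

lemma subseq_append_take_drop:
  assumes "subseq (xs @ ys) zs"
  obtains m where "subseq xs (take m zs)" and "subseq ys (drop m zs)"
proof -
  obtain zs1 zs2 where "zs = zs1 @ zs2" "subseq xs zs1" "subseq ys zs2"
    using list_emb_appendD[OF assms] by blast
  then show thesis using that[of "length zs1"] by simp
qed

lemma subseq_snoc_snoc_iff:
  "subseq (xs @ [a]) (ys @ [b]) \<longleftrightarrow> subseq (xs @ [a]) ys \<or> (a = b \<and> subseq xs ys)"
proof
  assume "subseq (xs @ [a]) (ys @ [b])"
  then obtain xs1 xs2 where split: "xs @ [a] = xs1 @ xs2" "subseq xs1 ys" "subseq xs2 [b]"
    by (auto elim: subseq_appendE)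
  from \<open>subseq xs2 [b]\<close> have "xs2 = [] \<or> xs2 = [b]"
    by (cases xs2) (auto split: if_splits)
  then show "subseq (xs @ [a]) ys \<or> (a = b \<and> subseq xs ys)"
    using split by auto
qed (auto intro: subseq_rev_drop_many)

lemma subseq_rev_iff [simp]: "subseq (rev xs) (rev ys) \<longleftrightarrow> subseq xs ys"
proof -
  have rev_mono: "subseq (rev xs) (rev ys)" if "subseq xs ys" for xs ys :: "'b list"
    using that
    by (induction rule: list_emb.induct) (auto intro: subseq_rev_drop_many list_emb_append_mono)
  show ?thesis using rev_mono[of "rev xs" "rev ys"] rev_mono[of xs ys] by auto
qed

lemma is_pos_le_length: "is_pos w a p \<Longrightarrow> p \<le> length w"
  by (simp add: is_pos_def)

lemma take_pos_eq_snoc: "is_pos w a p \<Longrightarrow> take p w = take (p - 1) w @ [a]"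
  unfolding is_pos_def by (cases p) (auto simp: take_Suc_conv_app_nth)

lemma drop_pred_pos_eq_Cons: "is_pos w a p \<Longrightarrow> drop (p - 1) w = a # drop p w"
  unfolding is_pos_def by (cases p) (auto simp: Cons_nth_drop_Suc)

lemma is_pos_rev: "is_pos (rev w) a (length w + 1 - p) \<longleftrightarrow> is_pos w a p"
proof (cases "1 \<le> p \<and> p \<le> length w")
  case True
  have "rev w ! (length w - p) = w ! (length w - Suc (length w - p))"
    using True by (intro rev_nth) arith
  also have "length w - Suc (length w - p) = p - 1" using True by arith
  finally have "rev w ! (length w - p) = w ! (p - 1)" .
  then show ?thesis using True by (auto simp: is_pos_def)
qed (auto simp: is_pos_def)

lemma next_pos_eq_Some_iff:
  "next_pos w a q = Some p \<longleftrightarrow> q < p \<and> is_pos w a p \<and> (\<forall>l. q < l \<and> l < p \<longrightarrow> \<not> is_pos w a l)"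
proof
  assume "next_pos w a q = Some p"
  then have ex: "\<exists>p. q < p \<and> is_pos w a p" and p: "p = (LEAST p. q < p \<and> is_pos w a p)"
    by (auto simp: next_pos_def split: if_splits)
  show "q < p \<and> is_pos w a p \<and> (\<forall>l. q < l \<and> l < p \<longrightarrow> \<not> is_pos w a l)"
    unfolding p using LeastI_ex[OF ex] not_less_Least by blast
next
  assume "q < p \<and> is_pos w a p \<and> (\<forall>l. q < l \<and> l < p \<longrightarrow> \<not> is_pos w a l)"
  then have "(LEAST p. q < p \<and> is_pos w a p) = p" and "\<exists>p. q < p \<and> is_pos w a p"
    by (auto intro!: Least_equality simp: not_less[symmetric])
  then show "next_pos w a q = Some p" by (simp add: next_pos_def)
qed

lemma next_pos_eq_None_iff: "next_pos w a q = None \<longleftrightarrow> (\<forall>p. q < p \<longrightarrow> \<not> is_pos w a p)"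
  by (simp add: next_pos_def)

lemma prev_pos_eq_Some_iff:
  "prev_pos w a q = Some p \<longleftrightarrow> p < q \<and> is_pos w a p \<and> (\<forall>l. p < l \<and> l < q \<longrightarrow> \<not> is_pos w a l)"
proof
  assume "prev_pos w a q = Some p"
  then have ex: "\<exists>p. p < q \<and> is_pos w a p" and p: "p = (GREATEST p. p < q \<and> is_pos w a p)"
    by (auto simp: prev_pos_def split: if_splits)
  have bd: "\<And>y. y < q \<and> is_pos w a y \<Longrightarrow> y \<le> q" by simp
  have "p < q \<and> is_pos w a p"
    unfolding p by (rule GreatestI_ex_nat[OF ex bd])
  moreover have "l \<le> p" if "l < q \<and> is_pos w a l" for l
    unfolding p using that bd by (rule Greatest_le_nat)
  ultimately show "p < q \<and> is_pos w a p \<and> (\<forall>l. p < l \<and> l < q \<longrightarrow> \<not> is_pos w a l)"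
    by (auto simp: not_less[symmetric])
next
  assume p: "p < q \<and> is_pos w a p \<and> (\<forall>l. p < l \<and> l < q \<longrightarrow> \<not> is_pos w a l)"
  then have "(GREATEST p. p < q \<and> is_pos w a p) = p"
    by (intro Greatest_equality) (auto simp: not_less[symmetric])
  then show "prev_pos w a q = Some p" using p by (auto simp: prev_pos_def)
qed

lemma prev_pos_eq_None_iff: "prev_pos w a q = None \<longleftrightarrow> (\<forall>p. p < q \<longrightarrow> \<not> is_pos w a p)"
  by (simp add: prev_pos_def)

lemma prev_pos_eq_next_pos_rev:
  assumes "q \<le> length w + 1"
  shows "prev_pos w a q = map_option (\<lambda>p. length w + 1 - p) (next_pos (rev w) a (length w + 1 - q))"
proof (cases "next_pos (rev w) a (length w + 1 - q)")
  case None
  have "\<not> is_pos w a p" if "p < q" for p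
  proof
    assume "is_pos w a p"
    then have "is_pos (rev w) a (length w + 1 - p)" by (simp only: is_pos_rev)
    moreover have "length w + 1 - q < length w + 1 - p" using that assms by arith
    ultimately show False using None by (simp add: next_pos_eq_None_iff)
  qed
  then show ?thesis using None by (simp add: prev_pos_eq_None_iff)
next
  case (Some p)
  then have p: "length w + 1 - q < p" "is_pos (rev w) a p"
      "\<forall>l. length w + 1 - q < l \<and> l < p \<longrightarrow> \<not> is_pos (rev w) a l"
    by (simp_all add: next_pos_eq_Some_iff)
  have "p \<le> length w" using is_pos_le_length[OF p(2)] by simp
  then have "is_pos w a (length w + 1 - p)" using p(2) is_pos_rev[of w a "length w + 1 - p"] by simp
  moreover have "\<not> is_pos w a l" if "length w + 1 - p < l" "l < q" for l
  proof
    assume "is_pos w a l"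
    then have "is_pos (rev w) a (length w + 1 - l)" by (simp only: is_pos_rev)
    moreover have "length w + 1 - q < length w + 1 - l" "length w + 1 - l < p"
      using that assms by arith+
    ultimately show False using p(3) by blast
  qed
  ultimately have "prev_pos w a q = Some (length w + 1 - p)"
    using p(1) assms \<open>p \<le> length w\<close> by (auto simp: prev_pos_eq_Some_iff)
  then show ?thesis using Some by simp
qed

lemma subseq_snoc_take_iff:
  "subseq (r @ [a]) (take m w) \<longleftrightarrow> (\<exists>p \<le> m. is_pos w a p \<and> subseq r (take (p - 1) w))"
proof (induction m)
  case 0
  then show ?case by (auto simp: is_pos_def)
next
  case (Suc m)
  show ?case
  proof (cases "m < length w")
    case True
    then have "take (Suc m) w = take m w @ [w ! m]" by (simp add: take_Suc_conv_app_nth)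
    moreover have "is_pos w a (Suc m) \<longleftrightarrow> w ! m = a" using True by (simp add: is_pos_def)
    ultimately show ?thesis
      using Suc by (auto simp: subseq_snoc_snoc_iff le_Suc_eq)
  next
    case False
    then have "p \<le> m" if "is_pos w a p" for p using that by (simp add: is_pos_def)
    then show ?thesis using Suc False by (auto simp: le_Suc_eq)
  qed
qed

section \<open>X-rankers and leftmost embeddings\<close>

lemma xev_snoc: "xev w q (r @ [a]) = (case xev w q r of None \<Rightarrow> None | Some p \<Rightarrow> next_pos w a p)"
  by (induction r arbitrary: q) (auto split: option.split)

lemma xrank_snoc: "xrank w (r @ [a]) = (case xrank w r of None \<Rightarrow> None | Some p \<Rightarrow> next_pos w a p)"
  by (simp add: xrank_def xev_snoc)

lemma xrank_eq_Least: "xrank w r = (if subseq r w then Some (LEAST n. subseq r (take n w)) else None)"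
proof (induction r rule: rev_induct)
  case Nil
  then show ?case by (simp add: xrank_def)
next
  case (snoc a r)
  show ?case
  proof (cases "subseq r w")
    case False
    then have "\<not> subseq (r @ [a]) w"
      by (meson subseq_rev_drop_many subseq_order.dual_order.trans subseq_order.order_refl)
    then show ?thesis using False snoc by (simp add: xrank_snoc)
  next
    case True
    define q where "q = (LEAST n. subseq r (take n w))"
    have r_take_iff: "subseq r (take n w) \<longleftrightarrow> q \<le> n" for n
    proof
      show "subseq r (take n w) \<Longrightarrow> q \<le> n" unfolding q_def by (rule Least_le)
      have "subseq r (take q w)" unfolding q_def by (rule LeastI[of _ "length w"]) (simp add: True)
      then show "q \<le> n \<Longrightarrow> subseq r (take n w)" by (meson subseq_take_mono subseq_order.order_trans)
    qed
    have snoc_iff: "subseq (r @ [a]) (take m w) \<longleftrightarrow> (\<exists>p \<le> m. q < p \<and> is_pos w a p)" for m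
      unfolding subseq_snoc_take_iff r_take_iff by (auto simp: is_pos_def)
    show ?thesis
    proof (cases "next_pos w a q")
      case None
      then have "\<not> subseq (r @ [a]) (take (length w) w)"
        unfolding snoc_iff next_pos_eq_None_iff by blast
      then show ?thesis using True None snoc by (simp add: xrank_snoc q_def)
    next
      case (Some p)
      then have p: "q < p" "is_pos w a p" "\<forall>l. q < l \<and> l < p \<longrightarrow> \<not> is_pos w a l"
        by (simp_all add: next_pos_eq_Some_iff)
      then have "(LEAST m. subseq (r @ [a]) (take m w)) = p"
        unfolding snoc_iff by (intro Least_equality) (auto simp: not_less[symmetric])
      moreover have "subseq (r @ [a]) w"
        using snoc_iff[of "length w"] p by (auto simp: is_pos_def)
      ultimately show ?thesis using True Some snoc by (simp add: xrank_snoc q_def)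
    qed
  qed
qed

lemma xrank_eq_Some_iff:
  "xrank w r = Some n \<longleftrightarrow> subseq r (take n w) \<and> (\<forall>m. subseq r (take m w) \<longrightarrow> n \<le> m)"
proof
  assume "xrank w r = Some n"
  then have "subseq r w" "n = (LEAST n. subseq r (take n w))"
    by (auto simp: xrank_eq_Least split: if_splits)
  then show "subseq r (take n w) \<and> (\<forall>m. subseq r (take m w) \<longrightarrow> n \<le> m)"
    using LeastI[of "\<lambda>n. subseq r (take n w)" "length w"] Least_le by auto
next
  assume n: "subseq r (take n w) \<and> (\<forall>m. subseq r (take m w) \<longrightarrow> n \<le> m)"
  then have "subseq r w" by (meson subseq_take subseq_order.order_trans)
  moreover have "(LEAST n. subseq r (take n w)) = n" using n by (intro Least_equality) auto
  ultimately show "xrank w r = Some n" by (simp add: xrank_eq_Least)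
qed

lemma xrank_eq_None_iff: "xrank w r = None \<longleftrightarrow> \<not> subseq r w"
  by (simp add: xrank_eq_Least)

lemma xrank_Some_subseq: "xrank w r = Some n \<Longrightarrow> subseq r w"
  by (simp add: xrank_eq_Least split: if_splits)

lemma xrank_defined_if_subseq:
  assumes "subseq r w"
  obtains n where "xrank w r = Some n"
  using assms by (cases "xrank w r") (simp_all add: xrank_eq_None_iff)

lemma xrank_le_length: "xrank w r = Some n \<Longrightarrow> n \<le> length w"
  by (auto simp: xrank_eq_Least split: if_splits intro: Least_le)

lemma xrank_snoc_eq_Some_iff:
  "xrank w (r @ [a]) = Some n \<longleftrightarrow> (\<exists>q. xrank w r = Some q \<and> next_pos w a q = Some n)"
  by (simp add: xrank_snoc split: option.split)

lemma xrank_last: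
  assumes "xrank w r = Some n" "r \<noteq> []"
  shows "is_pos w (last r) n"
proof -
  have "xrank w (butlast r @ [last r]) = Some n" using assms by simp
  then show ?thesis by (auto simp: xrank_snoc_eq_Some_iff next_pos_eq_Some_iff)
qed

lemma xrank_butlast_less:
  assumes "xrank w r = Some n" "r \<noteq> []"
  shows "\<exists>m. xrank w (butlast r) = Some m \<and> m < n"
proof -
  have "xrank w (butlast r @ [last r]) = Some n" using assms by simp
  then show ?thesis by (auto simp: xrank_snoc_eq_Some_iff next_pos_eq_Some_iff)
qed

lemma ex_xranker:
  assumes "1 \<le> p" "p \<le> length w"
  shows "\<exists>r. r \<noteq> [] \<and> xrank w r = Some p"
proof -
  define a where "a = w ! (p - 1)"
  have pos: "is_pos w a p" using assms by (simp add: is_pos_def a_def)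
  define r where "r = filter (\<lambda>c. c = a) (take (p - 1) w) @ [a]"
  have "subseq r (take p w)"
    unfolding r_def take_pos_eq_snoc[OF pos] by (simp add: list_emb_append_mono)
  moreover have "p \<le> m" if "subseq r (take m w)" for m
  proof (rule ccontr)
    assume "\<not> p \<le> m"
    then have "subseq (take m w) (take (p - 1) w)" by (intro subseq_take_mono) simp
    with that have "subseq r (take (p - 1) w)" by (rule subseq_order.order_trans)
    then have "length (filter (\<lambda>c. c = a) r) \<le> length (filter (\<lambda>c. c = a) (take (p - 1) w))"
      by (rule list_emb_length[OF subseq_filter])
    then show False by (simp add: r_def)
  qed
  ultimately have "xrank w r = Some p" by (simp add: xrank_eq_Some_iff)
  then show ?thesis by (auto simp: r_def)
qed

lemma xattr_le: "r \<noteq> [] \<Longrightarrow> xrank w r = Some p \<Longrightarrow> xattr w p \<le> length r"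
  unfolding xattr_def by (rule Least_le) blast

lemma ex_xranker_xattr:
  assumes "1 \<le> p" "p \<le> length w"
  shows "\<exists>r. r \<noteq> [] \<and> length r = xattr w p \<and> xrank w r = Some p"
  using LeastI_ex[of "\<lambda>m. \<exists>r. r \<noteq> [] \<and> length r = m \<and> xrank w r = Some p"]
    ex_xranker[OF assms]
  unfolding xattr_def by blast

section \<open>Y-rankers as X-rankers of the reversed word\<close>

lemma yev_eq_xev_rev:
  "q \<le> length w + 1 \<Longrightarrow>
    yev w q t = map_option (\<lambda>p. length w + 1 - p) (xev (rev w) (length w + 1 - q) t)"
proof (induction t arbitrary: q)
  case Nil
  then show ?case by simp
next
  case (Cons a t)
  show ?case
  proof (cases "next_pos (rev w) a (length w + 1 - q)")
    case None
    then show ?thesis using prev_pos_eq_next_pos_rev[OF Cons.prems] by simp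
  next
    case (Some p)
    then have "p \<le> length w"
      using is_pos_le_length[of "rev w" a p] by (simp add: next_pos_eq_Some_iff)
    then show ?thesis
      using Some prev_pos_eq_next_pos_rev[OF Cons.prems] Cons.IH[of "length w + 1 - p"] by simp
  qed
qed

lemma yrank_eq_xrank_rev: "yrank w t = map_option (\<lambda>p. length w + 1 - p) (xrank (rev w) t)"
  by (simp add: yrank_def xrank_def yev_eq_xev_rev)

lemma yrank_eq_SomeD:
  assumes "yrank w t = Some p" "t \<noteq> []"
  shows "is_pos w (last t) p" and "subseq (rev t) (drop (p - 1) w)"
    and "\<And>m. subseq (rev t) (drop m w) \<Longrightarrow> m < p"
proof -
  obtain n where n: "xrank (rev w) t = Some n" and p: "p = length w + 1 - n"
    using assms(1) by (auto simp: yrank_eq_xrank_rev)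
  have pos: "is_pos (rev w) (last t) n" using xrank_last[OF n assms(2)] .
  then have n_bounds: "1 \<le> n" "n \<le> length w" by (auto simp: is_pos_def)
  have "is_pos (rev w) (last t) (length w + 1 - p)" using pos n_bounds p by simp
  then show "is_pos w (last t) p" by (simp only: is_pos_rev)
  have "subseq t (take n (rev w))" using n by (simp add: xrank_eq_Some_iff)
  also have "take n (rev w) = rev (drop (p - 1) w)" using p n_bounds by (simp add: take_rev)
  finally show "subseq (rev t) (drop (p - 1) w)" by (metis subseq_rev_iff rev_rev_ident)
  fix m
  assume "subseq (rev t) (drop m w)"
  then have "subseq t (take (length w - m) (rev w))" by (metis subseq_rev_iff rev_rev_ident rev_drop)
  then have "n \<le> length w - m" using n by (simp add: xrank_eq_Some_iff)
  then show "m < p" using p n_bounds by arith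
qed

lemma ex_yranker_yattr:
  assumes "1 \<le> p" "p \<le> length w"
  shows "\<exists>t. t \<noteq> [] \<and> length t = yattr w p \<and> yrank w t = Some p"
proof -
  have "1 \<le> length w + 1 - p" "length w + 1 - p \<le> length (rev w)" using assms by auto
  then obtain t where "t \<noteq> []" "xrank (rev w) t = Some (length w + 1 - p)"
    using ex_xranker by blast
  then have "t \<noteq> [] \<and> yrank w t = Some p" using assms by (simp add: yrank_eq_xrank_rev)
  then show ?thesis
    using LeastI_ex[of "\<lambda>m. \<exists>t. t \<noteq> [] \<and> length t = m \<and> yrank w t = Some p"]
    unfolding yattr_def by blast
qed

section \<open>Canonical X-rankers\<close>

lemma canS_Suc_subset: "canS u p (Suc d) \<subseteq> canS u p d"
  by (auto simp: Let_def)

lemma canS_subset_canS_0: "canS u p d \<subseteq> canS u p 0"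
  by (induction d) (use canS_Suc_subset in blast)+

lemma finite_xrank_values: "finite {q. \<exists>r \<in> R. xrank u (f r) = Some q}"
  by (rule finite_subset[of _ "{..length u}"]) (auto dest: xrank_le_length)

lemma canS_nonempty:
  assumes "1 \<le> p" "p \<le> length u"
  shows "canS u p d \<noteq> {}"
proof (induction d)
  case 0
  then show ?case using ex_xranker_xattr[OF assms] by auto
next
  case (Suc d)
  define t where "t = xattr u p - Suc d"
  define Q where "Q = {q. \<exists>r \<in> canS u p d. xrank u (take t r) = Some q}"
  obtain r where r: "r \<in> canS u p d" using Suc by blast
  then have "r \<in> canS u p 0" using canS_subset_canS_0 by blast
  then have "subseq r u" by (auto intro: xrank_Some_subseq)
  with subseq_take have "subseq (take t r) u" by (rule subseq_order.order_trans)
  then obtain q where "xrank u (take t r) = Some q" by (rule xrank_defined_if_subseq)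
  with r have "Q \<noteq> {}" by (auto simp: Q_def)
  moreover have "finite Q" unfolding Q_def by (rule finite_xrank_values)
  ultimately have "Min Q \<in> Q" by simp
  then obtain r' where "r' \<in> canS u p d" "xrank u (take t r') = Some (Min Q)" by (auto simp: Q_def)
  then have "r' \<in> canS u p (Suc d)" by (simp add: Let_def t_def Q_def)
  then show ?case by blast
qed

lemma canS_take_eq:
  assumes "r1 \<in> canS u p d" "r2 \<in> canS u p d" "xattr u p - d \<le> t"
  shows "xrank u (take t r1) = xrank u (take t r2)"
  using assms
proof (induction d arbitrary: t)
  case 0
  then show ?case by simp
next
  case (Suc d)
  show ?case
  proof (cases "xattr u p - d \<le> t")
    case True
    then show ?thesis using Suc canS_Suc_subset by blast
  next
    case False
    then have "t = xattr u p - Suc d" using Suc.prems(3) by simp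
    then show ?thesis using Suc.prems(1,2) by (simp add: Let_def)
  qed
qed

lemma canS_last_eq_canon:
  assumes "1 \<le> p" "p \<le> length u"
  shows "canS u p (xattr u p - 1) = {canon u p}"
proof -
  have unique: "r1 = r2"
    if r: "r1 \<in> canS u p (xattr u p - 1)" "r2 \<in> canS u p (xattr u p - 1)" for r1 r2
  proof (rule nth_equalityI)
    have r0: "r1 \<in> canS u p 0" "r2 \<in> canS u p 0" using r canS_subset_canS_0 by blast+
    then show len: "length r1 = length r2" by simp
    fix n
    assume n: "n < length r1"
    have "subseq (take (Suc n) r1) u"
      using subseq_order.order_trans[OF subseq_take xrank_Some_subseq] r0
      by auto
    then obtain q where q1: "xrank u (take (Suc n) r1) = Some q" by (rule xrank_defined_if_subseq)
    moreover have "xrank u (take (Suc n) r1) = xrank u (take (Suc n) r2)"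
      using r by (rule canS_take_eq) simp
    ultimately have q2: "xrank u (take (Suc n) r2) = Some q" by simp
    have "last (take (Suc n) r1) = r1 ! n" "last (take (Suc n) r2) = r2 ! n"
      using n len by (simp_all add: take_Suc_conv_app_nth)
    then show "r1 ! n = r2 ! n"
      using xrank_last[OF q1] xrank_last[OF q2] r0 by (auto simp: is_pos_def)
  qed
  obtain r where "r \<in> canS u p (xattr u p - 1)" using canS_nonempty[OF assms] by blast
  with unique have "canS u p (xattr u p - 1) = {r}" and "canon u p = r"
    unfolding canon_def by (blast, blast)
  then show ?thesis by simp
qed

lemma canon_minimal_ranker:
  assumes "1 \<le> p" "p \<le> length u"
  shows "canon u p \<noteq> []" "length (canon u p) = xattr u p" "xrank u (canon u p) = Some p"
  using canS_last_eq_canon[OF assms] canS_subset_canS_0[of u p "xattr u p - 1"] by auto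

lemma canS_Suc_eq_snoc_image:
  assumes xattr_j: "xattr u j = Suc (xattr u i)"
    and base: "canS u j 1 = (\<lambda>r. r @ [a]) ` canS u i 0"
  shows "canS u j (Suc d) = (\<lambda>r. r @ [a]) ` canS u i d"
proof (induction d)
  case 0
  then show ?case using base by simp
next
  case (Suc d)
  define t where "t = xattr u i - Suc d"
  have t: "xattr u j - Suc (Suc d) = t" using xattr_j by (simp add: t_def)
  have take_snoc: "take t (r @ [a]) = take t r" if "r \<in> canS u i d" for r
    using that canS_subset_canS_0[of u i d] by (auto simp: t_def)
  have Q_eq: "{q. \<exists>s \<in> canS u j (Suc d). xrank u (take t s) = Some q}
      = {q. \<exists>r \<in> canS u i d. xrank u (take t r) = Some q}"
    using take_snoc by (auto simp del: canS.simps take_append simp: Suc.IH)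
  show ?case
    unfolding canS.simps(2)[of u j "Suc d"] canS.simps(2)[of u i d] Let_def t Q_eq
      t_def[symmetric]
    by (auto simp del: canS.simps take_append simp: Suc.IH take_snoc)
qed

lemma canS_1_eq_snoc_image:
  assumes pos: "is_pos u a i" and j_next: "next_pos u a i = Some j"
    and xattr_j: "xattr u j = Suc (xattr u i)"
  shows "canS u j 1 = (\<lambda>r. r @ [a]) ` canS u i 0"
proof -
  have i: "1 \<le> i" "i \<le> length u" using pos by (simp_all add: is_pos_def)
  have "i < j" and j: "is_pos u a j" using j_next by (simp_all add: next_pos_eq_Some_iff)
  have snoc_in: "r @ [a] \<in> canS u j 0" if "r \<in> canS u i 0" for r
    using that j_next xattr_j by (simp add: xrank_snoc)
  have prefix_reaches:
    "s = take (xattr u i) s @ [a] \<and> (\<exists>q. xrank u (take (xattr u i) s) = Some q \<and> i \<le> q)"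
    if "s \<in> canS u j 0" for s
  proof -
    have s: "s \<noteq> []" "length s = Suc (xattr u i)" "xrank u s = Some j"
      using that xattr_j by simp_all
    then have butlast: "butlast s = take (xattr u i) s" by (simp add: butlast_conv_take)
    have "xrank u (butlast s @ [last s]) = Some j" using s by simp
    then obtain q where q: "xrank u (butlast s) = Some q" "next_pos u (last s) q = Some j"
      by (auto simp: xrank_snoc_eq_Some_iff)
    then have "last s = a" using j by (auto simp: next_pos_eq_Some_iff is_pos_def)
    moreover have "i \<le> q"
    proof (rule ccontr)
      assume "\<not> i \<le> q"
      then show False using q(2) pos \<open>last s = a\<close> \<open>i < j\<close> by (auto simp: next_pos_eq_Some_iff)
    qed
    ultimately show ?thesis using q(1) s(1) butlast by (metis append_butlast_last_id)
  qed
  define Q where "Q = {q. \<exists>s \<in> canS u j 0. xrank u (take (xattr u i) s) = Some q}"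
  have "Min Q = i"
  proof (rule Min_eqI)
    show "finite Q" unfolding Q_def by (rule finite_xrank_values)
    show "i \<le> q" if "q \<in> Q" for q using that prefix_reaches by (fastforce simp: Q_def)
    obtain r where "r \<in> canS u i 0" using canS_nonempty[OF i] by blast
    then show "i \<in> Q" using snoc_in unfolding Q_def by force
  qed
  then have "canS u j 1 = {s \<in> canS u j 0. xrank u (take (xattr u i) s) = Some i}"
    using xattr_j by (simp add: Let_def Q_def del: canS.simps(1))
  also have "\<dots> = (\<lambda>r. r @ [a]) ` canS u i 0"
  proof (intro set_eqI iffI)
    fix s
    assume "s \<in> {s \<in> canS u j 0. xrank u (take (xattr u i) s) = Some i}"
    then have s: "s \<in> canS u j 0" and reach: "xrank u (take (xattr u i) s) = Some i" by simp_all
    have "take (xattr u i) s \<noteq> []"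
    proof
      assume "take (xattr u i) s = []"
      with reach have "xrank u [] = Some i" by (simp only:)
      with i show False by (simp add: xrank_def)
    qed
    then have "take (xattr u i) s \<in> canS u i 0" using s reach xattr_j by simp
    moreover have "s = take (xattr u i) s @ [a]" using prefix_reaches[OF s] by blast
    ultimately show "s \<in> (\<lambda>r. r @ [a]) ` canS u i 0" by blast
  next
    fix s
    assume "s \<in> (\<lambda>r. r @ [a]) ` canS u i 0"
    then show "s \<in> {s \<in> canS u j 0. xrank u (take (xattr u i) s) = Some i}"
      using snoc_in by auto
  qed
  finally show ?thesis .
qed

lemma canon_snoc:
  assumes pos: "is_pos u a i" and j_next: "next_pos u a i = Some j"
    and less: "xattr u i < xattr u j"
  shows "canon u j = canon u i @ [a]"
proof -
  have i: "1 \<le> i" "i \<le> length u" using pos by (simp_all add: is_pos_def)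
  have j: "1 \<le> j" "j \<le> length u"
    using j_next by (simp_all add: next_pos_eq_Some_iff is_pos_def)
  have "xrank u (canon u i @ [a]) = Some j"
    using canon_minimal_ranker(3)[OF i] j_next by (simp add: xrank_snoc)
  then have "xattr u j \<le> Suc (xattr u i)"
    using xattr_le[of "canon u i @ [a]"] canon_minimal_ranker(2)[OF i] by simp
  with less have xattr_j: "xattr u j = Suc (xattr u i)" by simp
  have "xattr u i \<noteq> 0" using canon_minimal_ranker(1,2)[OF i] by (metis length_0_conv)
  then have "canS u j (xattr u j - 1) = (\<lambda>r. r @ [a]) ` canS u i (xattr u i - 1)"
    using canS_Suc_eq_snoc_image[OF xattr_j canS_1_eq_snoc_image[OF pos j_next xattr_j]]
      xattr_j by (metis Suc_pred' diff_Suc_1 not_gr0)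
  then show ?thesis using canS_last_eq_canon[OF i] canS_last_eq_canon[OF j] by simp
qed

section \<open>Transfer along the congruence\<close>

lemma simk_subseq_iff: "simk k u v \<Longrightarrow> length w \<le> k \<Longrightarrow> subseq w u \<longleftrightarrow> subseq w v"
  by (simp add: simk_def)

lemma simk_xrank_defined:
  assumes "simk k u v" "xrank u r = Some n" "length r \<le> k"
  obtains m where "xrank v r = Some m"
proof -
  have "subseq r v" using assms simk_subseq_iff xrank_Some_subseq by blast
  then show thesis using that by (rule xrank_defined_if_subseq)
qed

lemma simk_yranker_after_xranker:
  assumes "simk k u v"
    and r: "xrank u r = Some i" "r \<noteq> []"
    and t: "yrank u t = Some i" "t \<noteq> []"
    and len: "length r + length t \<le> k + 1"
  shows "\<exists>p. xrank v r = Some p \<and> subseq (rev t) (drop (p - 1) v)"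
proof -
  define a where "a = last r"
  have pos: "is_pos u a i" using xrank_last[OF r] by (simp add: a_def)
  moreover have "is_pos u (last t) i" by (rule yrank_eq_SomeD(1)[OF t])
  ultimately have "last t = a" by (simp add: is_pos_def)
  have "rev t = rev (butlast t @ [last t])" using t(2) by simp
  then have rev_t: "rev t = a # rev (butlast t)" using \<open>last t = a\<close> by simp
  have "subseq (rev t) (drop (i - 1) u)" by (rule yrank_eq_SomeD(2)[OF t])
  then have "subseq (rev (butlast t)) (drop i u)"
    unfolding rev_t drop_pred_pos_eq_Cons[OF pos] by simp
  moreover have "subseq r (take i u)" using r(1) by (simp add: xrank_eq_Some_iff)
  ultimately have "subseq (r @ rev (butlast t)) (take i u @ drop i u)"
    by (intro list_emb_append_mono)
  moreover have "length (r @ rev (butlast t)) \<le> k" using len t(2) by (cases t) auto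
  ultimately have "subseq (r @ rev (butlast t)) v" using simk_subseq_iff[OF assms(1)] by simp
  then obtain m where m: "subseq r (take m v)" "subseq (rev (butlast t)) (drop m v)"
    by (rule subseq_append_take_drop)
  have "subseq r v" using m(1) subseq_take by (rule subseq_order.order_trans)
  then obtain p where p: "xrank v r = Some p" by (rule xrank_defined_if_subseq)
  then have "p \<le> m" using m(1) by (simp add: xrank_eq_Some_iff)
  then have "subseq (rev (butlast t)) (drop p v)"
    using subseq_order.order_trans[OF m(2) subseq_drop_mono] by blast
  moreover have "is_pos v a p" using xrank_last[OF p r(2)] by (simp add: a_def)
  ultimately have "subseq (rev t) (drop (p - 1) v)"
    using drop_pred_pos_eq_Cons[of v a p] unfolding rev_t by simp
  with p show ?thesis by blast
qed

lemma simk_xrank_less_if_not_longer: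
  assumes "simk k u v"
    and r: "xrank u r = Some i" "r \<noteq> []"
    and t: "yrank u t = Some i" "t \<noteq> []"
    and len: "length r + length t \<le> k + 1"
    and s: "xrank u s = Some j" "s \<noteq> []" "length s \<le> length r"
    and "i < j" and same_letter: "u ! (j - 1) = u ! (i - 1)"
  shows "\<exists>p q. xrank v r = Some p \<and> xrank v s = Some q \<and> p < q"
proof -
  obtain p where p: "xrank v r = Some p" and t_in_v: "subseq (rev t) (drop (p - 1) v)"
    using simk_yranker_after_xranker[OF assms(1) r t len] by blast
  have "length s \<le> k" using len s(3) t(2) by (cases t) auto
  then obtain q where q: "xrank v s = Some q" using simk_xrank_defined[OF assms(1) s(1)] by blast
  have "p < q"
  proof (rule ccontr)
    assume "\<not> p < q"
    obtain q0 where q0: "xrank v (butlast s) = Some q0" "q0 < q"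
      using xrank_butlast_less[OF q s(2)] by blast
    then have "subseq (butlast s) (take (p - 1) v)"
      using \<open>\<not> p < q\<close> subseq_order.order_trans[OF _ subseq_take_mono[of q0 "p - 1" v]]
      by (simp add: xrank_eq_Some_iff)
    then have "subseq (butlast s @ rev t) (take (p - 1) v @ drop (p - 1) v)"
      using t_in_v by (rule list_emb_append_mono)
    moreover have "length (butlast s @ rev t) \<le> k" using len s(2,3) by (cases s) auto
    ultimately have "subseq (butlast s @ rev t) u" using simk_subseq_iff[OF assms(1)] by simp
    then obtain m where m: "subseq (butlast s) (take m u)" "subseq (rev t) (drop m u)"
      by (rule subseq_append_take_drop)
    have "m < i" by (rule yrank_eq_SomeD(3)[OF t m(2)])
    then have "subseq (butlast s) (take (i - 1) u)"
      using subseq_order.order_trans[OF m(1) subseq_take_mono] by simp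
    then have "subseq (butlast s @ [last s]) (take (i - 1) u @ [last s])" by simp
    moreover have "is_pos u (last s) i"
      using xrank_last[OF s(1,2)] xrank_last[OF r] same_letter by (simp add: is_pos_def)
    ultimately have "subseq s (take i u)" using s(2) by (simp add: take_pos_eq_snoc)
    then have "j \<le> i" using s(1) by (simp add: xrank_eq_Some_iff)
    with \<open>i < j\<close> show False by simp
  qed
  with p q show ?thesis by blast
qed

theorem lemma7:
  fixes k :: nat and u v :: "'a::finite list" and i j :: nat
  assumes "1 \<le> i" and "i < j" and "j \<le> length u"
    and "u ! (i - 1) = u ! (j - 1)"
    and "\<forall>l. i < l \<and> l < j \<longrightarrow> u ! (l - 1) \<noteq> u ! (i - 1)"
    and "xattr u i + yattr u i \<le> k + 1"
    and "xattr u j \<le> k"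
    and "simk k u v"
  shows "\<exists>p q. xrank v (canon u i) = Some p \<and> xrank v (canon u j) = Some q \<and> p < q"
proof -
  define a where "a = u ! (i - 1)"
  have i: "1 \<le> i" "i \<le> length u" and j: "1 \<le> j" "j \<le> length u" using assms(1-3) by simp_all
  have pos_i: "is_pos u a i" using i by (simp add: is_pos_def a_def)
  have j_next: "next_pos u a i = Some j"
    using assms(2,4,5) j by (auto simp: next_pos_eq_Some_iff is_pos_def a_def)
  obtain t where t: "t \<noteq> []" "length t = yattr u i" "yrank u t = Some i"
    using ex_yranker_yattr[OF i] by blast
  note r = canon_minimal_ranker[OF i] and s = canon_minimal_ranker[OF j]
  show ?thesis
  proof (cases "xattr u j \<le> xattr u i")
    case True
    show ?thesis
      by (rule simk_xrank_less_if_not_longer[OF assms(8) r(3,1) t(3,1) _ s(3,1)])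
        (use assms(2,4,6) r(2) s(2) t(2) True in simp_all)
  next
    case False
    then have canon_j: "canon u j = canon u i @ [a]" by (intro canon_snoc[OF pos_i j_next]) simp
    obtain q where q: "xrank v (canon u j) = Some q"
      by (rule simk_xrank_defined[OF assms(8) s(3)]) (use s(2) assms(7) in simp)
    then obtain p where "xrank v (canon u i) = Some p" "p < q"
      using xrank_butlast_less[OF q] canon_j by auto
    with q show ?thesis by blast
  qed
qed

end
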